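(* Every strictly incoherent operation (SIO) acting on a single qutrit $\mathcal{H}_3$ admits a Kraus decomposition $\Phi(\rho)=\sum_{n=1}^N K_n\rho K_n^\dagger$ with at most $N=13$ strictly incoherent Kraus operators.
   Context: Fix an orthonormal basis $\{|i\rangle\}_{i=1}^d$ of $\mathcal{H}_d$. A state is incoherent if it is diagonal in this basis; let $\mathcal{I}$ denote the set of incoherent states. A Kraus operator $K$ is incoherent if $K\rho K^\dagger/\mathrm{Tr}[K\rho K^\dagger]\in\mathcal{I}$ for all $\rho\in\mathcal{I}$ with nonzero trace (equivalently, each column of $K$ has at most one nonzero entry). A completely positive trace-preserving map $\Phi$ is a strictly incoherent operation (SIO) if it has a Kraus representation $\Phi(\rho)=\sum_n K_n\rho K_n^\dagger$, $\sum_n K_n^\dagger K_n=I$, such that both every $K_n$ and every $K_n^\dagger$ are incoherent (equivalently, each row and each column of each $K_n$ has at most one nonzero entry); such $K_n$ are called strictly incoherent Kraus operators. *)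

theory Defs
  imports "HOL-Analysis.Analysis"
begin

text \<open>Operators on the qutrit H_3 are 3x3 complex matrices, written in the
fixed (computational) basis indexed by the finite type 3.\<close>

type_synonym qmat = "complex ^ 3 ^ 3"

definition cadj :: "qmat \<Rightarrow> qmat" where
  "cadj A = (\<chi> i j. cnj (A $ j $ i))"

definition ctrace :: "qmat \<Rightarrow> complex" where
  "ctrace A = (\<Sum>i\<in>UNIV. A $ i $ i)"

definition diagonal_mat :: "qmat \<Rightarrow> bool" where
  "diagonal_mat A \<longleftrightarrow> (\<forall>i j. i \<noteq> j \<longrightarrow> A $ i $ j = 0)"

definition density_matrix :: "qmat \<Rightarrow> bool" where
  "density_matrix \<rho> \<longleftrightarrow> cadj \<rho> = \<rho> \<and>
     (\<forall>v :: complex ^ 3. Im (\<Sum>i\<in>UNIV. cnj (v $ i) * (\<rho> *v v) $ i) = 0 \<and>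
                         Re (\<Sum>i\<in>UNIV. cnj (v $ i) * (\<rho> *v v) $ i) \<ge> 0) \<and>
     ctrace \<rho> = 1"

definition incoherent_state :: "qmat \<Rightarrow> bool" where
  "incoherent_state \<rho> \<longleftrightarrow> density_matrix \<rho> \<and> diagonal_mat \<rho>"

definition incoherent_kraus :: "qmat \<Rightarrow> bool" where
  "incoherent_kraus K \<longleftrightarrow>
     (\<forall>\<rho>. incoherent_state \<rho> \<longrightarrow> ctrace (K ** \<rho> ** cadj K) \<noteq> 0 \<longrightarrow>
        incoherent_state (\<chi> i j. (K ** \<rho> ** cadj K) $ i $ j / ctrace (K ** \<rho> ** cadj K)))"

definition strictly_incoherent_kraus :: "qmat \<Rightarrow> bool" where
  "strictly_incoherent_kraus K \<longleftrightarrow> incoherent_kraus K \<and> incoherent_kraus (cadj K)"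

definition kraus_rep :: "(qmat \<Rightarrow> qmat) \<Rightarrow> qmat list \<Rightarrow> bool" where
  "kraus_rep \<Phi> Ks \<longleftrightarrow>
     sum_list (map (\<lambda>K. cadj K ** K) Ks) = mat 1 \<and>
     (\<forall>\<rho>. \<Phi> \<rho> = sum_list (map (\<lambda>K. K ** \<rho> ** cadj K) Ks))"

definition SIO :: "(qmat \<Rightarrow> qmat) \<Rightarrow> bool" where
  "SIO \<Phi> \<longleftrightarrow> (\<exists>Ks. kraus_rep \<Phi> Ks \<and> (\<forall>K\<in>set Ks. strictly_incoherent_kraus K))"

end

theory Submission
  imports Defs "HOL-Combinatorics.Permutations"
begin

text \<open>A strictly incoherent Kraus operator has the form K e_i = v_i e_(p i) for a permutation p
  of the basis. Grouping the operators of an SIO by p writes it as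
  \<Phi>(\<rho>) = \<Sum>_p P_p (G_p \<circ> \<rho>) P_p^\<dagger> with positive semidefinite G_p whose diagonals sum to 1,
  and conversely every decomposition of each G_p into outer products v v^\<dagger> yields one Kraus
  operator per term. A 3x3 positive semidefinite matrix is a sum of three outer products, and
  even of two plus t E_ii for any prescribed i. Since the term t E_ii only contributes
  t \<rho>_ii E_(p i)(p i), it can be moved from G_p to G_q whenever p i = q i. Two permutations
  of three points either share such a value or both share one with a third permutation, so
  these moves leave at most one G_p needing three terms, giving 2 \<cdot> 6 + 1 = 13 Kraus
  operators.\<close>

definition qform :: "complex^'n^'n \<Rightarrow> complex^'n \<Rightarrow> complex" where
  "qform M x = (\<Sum>a\<in>UNIV. cnj (x $ a) * (\<Sum>b\<in>UNIV. M $ a $ b * x $ b))"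

definition hermitian :: "complex^'n^'n \<Rightarrow> bool" where
  "hermitian M \<longleftrightarrow> (\<forall>a b. cnj (M $ a $ b) = M $ b $ a)"

definition psd :: "complex^'n^'n \<Rightarrow> bool" where
  "psd M \<longleftrightarrow> hermitian M \<and> (\<forall>x. 0 \<le> Re (qform M x))"

definition outer :: "complex^'n \<Rightarrow> complex^'n^'n" where
  "outer v = (\<chi> a b. v $ a * cnj (v $ b))"

definition diag_proj :: "'n \<Rightarrow> real \<Rightarrow> complex^'n^'n" where
  "diag_proj i t = (\<chi> a b. if a = i \<and> b = i then of_real t else 0)"

definition sum_two_outer :: "complex^'n^'n \<Rightarrow> bool" where
  "sum_two_outer M \<longleftrightarrow> (\<exists>v w. M = outer v + outer w)"

lemma cnj_if_zero: "cnj (if P then a else 0) = (if P then cnj a else 0)"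
  by simp

lemma if_zero_mult: "(if P then c else 0) * (y::complex) = (if P then c * y else 0)"
  by simp

lemma mult_if_zero: "(y::complex) * (if P then c else 0) = (if P then y * c else 0)"
  by simp

lemma qform_eq_mult_vec: "(\<Sum>i\<in>UNIV. cnj (v $ i) * (M *v v) $ i) = qform M v"
  by (simp add: qform_def matrix_vector_mult_def)

lemma qform_add: "qform (M + N) x = qform M x + qform N x"
  by (simp add: qform_def algebra_simps sum.distrib)

lemma qform_diff: "qform (M - N) x = qform M x - qform N x"
  by (simp add: qform_def algebra_simps sum_subtractf)

lemma scaleR_mat_nth: "(r *\<^sub>R M) $ a $ b = of_real r * (M $ a $ b :: complex)"
  by (simp only: vector_scaleR_component) (simp add: scaleR_conv_of_real)

lemma qform_scaleR: "qform (r *\<^sub>R M) x = of_real r * qform M x"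
  by (simp add: qform_def scaleR_mat_nth sum_distrib_left algebra_simps del: vector_scaleR_component)

lemma qform_outer:
  "qform (outer v) x = (\<Sum>a\<in>UNIV. cnj (x $ a) * v $ a) * (\<Sum>b\<in>UNIV. cnj (v $ b) * x $ b)"
  unfolding qform_def outer_def sum_distrib_left sum_distrib_right
  by (subst sum.swap) (simp add: mult.assoc mult.left_commute)

lemma qform_unit: "qform M (\<chi> c. if c = i then 1 else 0) = M $ i $ i"
  by (simp add: qform_def mult_if_zero if_zero_mult cnj_if_zero)

lemma qform_diag_proj: "qform (diag_proj i t) x = of_real t * (cnj (x $ i) * x $ i)"
proof -
  have "(\<Sum>b\<in>UNIV. (if a = i \<and> b = i then complex_of_real t else 0) * x $ b)
      = (if a = i then of_real t * x $ i else 0)" for a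
    by (cases "a = i") (simp_all add: if_zero_mult)
  then show ?thesis by (simp add: qform_def diag_proj_def mult_if_zero)
qed

lemma qform_two_point:
  assumes "i \<noteq> b"
  shows "qform M ((\<chi> c. if c = i then l else 0) + (\<chi> c. if c = b then m else 0)) =
    cnj l * (M $ i $ i * l + M $ i $ b * m) + cnj m * (M $ b $ i * l + M $ b $ b * m)"
proof -
  have inner: "(\<Sum>c\<in>UNIV. M $ a $ c * ((if c = i then l else 0) + (if c = b then m else 0)))
      = M $ a $ i * l + M $ a $ b * m" for a
    by (simp add: distrib_left sum.distrib mult_if_zero)
  show ?thesis
    unfolding qform_def using assms
    by (simp add: inner distrib_right sum.distrib if_zero_mult cnj_if_zero)
qed

lemma qform_add_unit:
  "qform M (x + (\<chi> c. if c = i then \<beta> else 0)) = qform M x + \<beta> * (\<Sum>a\<in>UNIV. cnj (x $ a) * M $ a $ i)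
     + cnj \<beta> * (\<Sum>b\<in>UNIV. M $ i $ b * x $ b) + cnj \<beta> * \<beta> * M $ i $ i"
proof -
  define S where "S a = (\<Sum>b\<in>UNIV. M $ a $ b * x $ b)" for a
  have inner: "(\<Sum>b\<in>UNIV. M $ a $ b * (x $ b + (if b = i then \<beta> else 0))) = S a + M $ a $ i * \<beta>" for a
    by (simp add: S_def distrib_left sum.distrib mult_if_zero)
  have "qform M (x + (\<chi> c. if c = i then \<beta> else 0)) =
     (\<Sum>a\<in>UNIV. (cnj (x $ a) + (if a = i then cnj \<beta> else 0)) * (S a + M $ a $ i * \<beta>))"
    unfolding qform_def by (simp add: inner cnj_if_zero)
  also have "\<dots> = (\<Sum>a\<in>UNIV. cnj (x $ a) * S a) + (\<Sum>a\<in>UNIV. cnj (x $ a) * M $ a $ i) * \<beta>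
      + (\<Sum>a\<in>UNIV. (if a = i then cnj \<beta> * (S a + M $ a $ i * \<beta>) else 0))"
    by (simp add: distrib_right distrib_left sum.distrib sum_distrib_right mult.assoc if_zero_mult)
  also have "\<dots> = qform M x + \<beta> * (\<Sum>a\<in>UNIV. cnj (x $ a) * M $ a $ i)
     + cnj \<beta> * (\<Sum>b\<in>UNIV. M $ i $ b * x $ b) + cnj \<beta> * \<beta> * M $ i $ i"
    by (simp add: qform_def S_def algebra_simps)
  finally show ?thesis .
qed

lemma hermitian_qform_real: "hermitian M \<Longrightarrow> qform M x = of_real (Re (qform M x))"
proof -
  assume h: "hermitian M"
  have "cnj (qform M x) = (\<Sum>a\<in>UNIV. \<Sum>b\<in>UNIV. x $ a * (M $ b $ a * cnj (x $ b)))"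
    using h unfolding qform_def hermitian_def by (simp add: sum_distrib_left)
  also have "\<dots> = (\<Sum>b\<in>UNIV. \<Sum>a\<in>UNIV. x $ a * (M $ b $ a * cnj (x $ b)))"
    by (rule sum.swap)
  also have "\<dots> = qform M x"
    unfolding qform_def by (simp add: sum_distrib_left algebra_simps)
  finally show ?thesis by (simp add: complex_eq_iff)
qed

lemma hermitian_diag_real: "hermitian M \<Longrightarrow> M $ i $ i = of_real (Re (M $ i $ i))"
  unfolding hermitian_def by (metis Reals_cnj_iff complex_is_Real_iff of_real_Re)

lemma psd_zero: "psd 0"
  by (simp add: psd_def hermitian_def qform_def)

lemma psd_add: "psd M \<Longrightarrow> psd N \<Longrightarrow> psd (M + N)"
  by (simp add: psd_def hermitian_def qform_add)

lemma psd_sum_list: "\<forall>M\<in>set Ms. psd M \<Longrightarrow> psd (sum_list Ms)"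
  by (induction Ms) (simp_all add: psd_zero psd_add)

lemma psd_sum: "\<forall>i\<in>S. psd (f i) \<Longrightarrow> psd (sum f S)"
  by (induction S rule: infinite_finite_induct) (simp_all add: psd_zero psd_add)

lemma psd_scaleR: "0 \<le> r \<Longrightarrow> psd M \<Longrightarrow> psd (r *\<^sub>R M)"
  unfolding psd_def hermitian_def
  by (simp add: qform_scaleR scaleR_mat_nth del: vector_scaleR_component)

lemma psd_outer: "psd (outer v)"
proof -
  have "(\<Sum>a\<in>UNIV. cnj (x $ a) * v $ a) = cnj (\<Sum>b\<in>UNIV. cnj (v $ b) * x $ b)" for x
    by (simp add: mult.commute)
  moreover have "0 \<le> Re (cnj w * w)" for w
    by (simp add: complex_mult_cnj)
  ultimately have "0 \<le> Re (qform (outer v) x)" for x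
    unfolding qform_outer by (simp only:)
  then show ?thesis by (simp add: psd_def hermitian_def outer_def)
qed

lemma psd_diag_proj: "0 \<le> t \<Longrightarrow> psd (diag_proj i t)"
  unfolding psd_def hermitian_def qform_diag_proj
  by (auto simp: diag_proj_def complex_mult_cnj mult.commute[of "cnj _"])

lemma psd_diag_nonneg: "psd M \<Longrightarrow> 0 \<le> Re (M $ i $ i)"
  unfolding psd_def by (metis qform_unit)

lemma psd_zero_diag_imp_zero_row:
  assumes "psd M" "M $ i $ i = 0"
  shows "M $ i $ b = 0"
proof (rule ccontr)
  assume nz: "M $ i $ b \<noteq> 0"
  then have bi: "b \<noteq> i" using assms(2) by auto
  define z where "z = M $ i $ b"
  define s where "s = (\<bar>Re (M $ b $ b)\<bar> + 1) / (2 * (cmod z)^2)"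
  define l where "l = - (of_real s * z)"
  have zpos: "0 < (cmod z)^2" using nz z_def by simp
  have zz: "cnj z * z = of_real ((cmod z)^2)"
    by (metis complex_norm_square mult.commute)
  have Mbi: "M $ b $ i = cnj z"
    using assms(1) unfolding psd_def hermitian_def z_def by metis
  \<comment> \<open>The form at l e_i + e_b, with l a large multiple of -z, is negative.\<close>
  have "0 \<le> Re (qform M ((\<chi> c. if c = i then l else 0) + (\<chi> c. if c = b then 1 else 0)))"
    using assms by (simp add: psd_def)
  also have "qform M ((\<chi> c. if c = i then l else 0) + (\<chi> c. if c = b then 1 else 0))
      = cnj l * z + l * cnj z + M $ b $ b"
    using qform_two_point[OF bi[symmetric], of M l 1] assms(2) unfolding Mbi z_def[symmetric]
    by (simp add: algebra_simps)
  also have "cnj l * z + l * cnj z = - of_real (2 * s * (cmod z)^2)"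
  proof -
    have "cnj l * z = - (of_real s * (cnj z * z))" "l * cnj z = - (of_real s * (cnj z * z))"
      unfolding l_def by (simp_all add: mult.commute mult.left_commute)
    then show ?thesis unfolding zz by simp
  qed
  also have "Re (- of_real (2 * s * (cmod z)^2) + M $ b $ b) = - (\<bar>Re (M $ b $ b)\<bar> + 1) + Re (M $ b $ b)"
    using zpos unfolding s_def by (simp add: field_simps)
  finally show False by linarith
qed

text \<open>One Cholesky step: with v the i-th column of M scaled by 1/sqrt(M_ii), the form of
  M - v v^* at x equals the form of M at x - (w x / M_ii) e_i, where w x is the i-th entry of M x.\<close>
lemma psd_peel_row:
  fixes M :: "complex^'n^'n"
  assumes "psd M"
  shows "\<exists>v. psd (M - outer v) \<and> (\<forall>b. (M - outer v) $ i $ b = 0) \<and>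
      (\<forall>j. (\<forall>b. M $ j $ b = 0) \<longrightarrow> (\<forall>b. (M - outer v) $ j $ b = 0))"
proof (cases "M $ i $ i = 0")
  case True
  have "outer 0 = (0 :: complex^'n^'n)" by (simp add: outer_def vec_eq_iff)
  then show ?thesis using assms psd_zero_diag_imp_zero_row[OF assms True]
    by (intro exI[of _ 0]) simp
next
  case False
  have h: "hermitian M" using assms by (simp add: psd_def)
  have hc: "cnj (M $ a $ b) = M $ b $ a" for a b using h unfolding hermitian_def by simp
  define r where "r = Re (M $ i $ i)"
  have Mii: "M $ i $ i = of_real r" using hermitian_diag_real[OF h] r_def by simp
  have "r \<noteq> 0" using False Mii by auto
  then have rpos: "0 < r" using psd_diag_nonneg[OF assms, of i] r_def by linarith
  define v where "v = (\<chi> a. M $ a $ i / of_real (sqrt r))"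
  have sq: "of_real (sqrt r) * of_real (sqrt r) = (of_real r :: complex)"
    using rpos by (simp flip: of_real_mult)
  have ov: "outer v = (\<chi> a b. M $ a $ i * M $ i $ b / M $ i $ i)"
    unfolding outer_def v_def vec_eq_iff using sq
    by (simp add: hc Mii mult_divide_mult_cancel_left field_simps)
  define w where "w x = (\<Sum>b\<in>UNIV. M $ i $ b * x $ b)" for x
  have cw: "(\<Sum>a\<in>UNIV. cnj (x $ a) * M $ a $ i) = cnj (w x)" for x
    unfolding w_def by (simp add: hc mult.commute)
  have qform_ov: "qform (outer v) x = cnj (w x) * w x / M $ i $ i" for x
  proof -
    have "qform (outer v) x = (\<Sum>a\<in>UNIV. cnj (x $ a) * M $ a $ i) * w x / M $ i $ i"
      unfolding ov qform_def w_def
      by (simp add: sum_distrib_left sum_distrib_right sum_divide_distrib mult.assoc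
          mult.left_commute, rule sum.swap)
    then show ?thesis by (simp only: cw)
  qed
  have "0 \<le> Re (qform (M - outer v) x)" for x
  proof -
    have "qform M (x + (\<chi> c. if c = i then - w x / M $ i $ i else 0))
        = qform M x - cnj (w x) * w x / M $ i $ i"
      unfolding qform_add_unit cw w_def[symmetric] using False Mii by (simp add: field_simps)
    also have "\<dots> = qform (M - outer v) x" by (simp add: qform_diff qform_ov)
    finally show ?thesis using assms unfolding psd_def by metis
  qed
  moreover have "hermitian (M - outer v)"
    unfolding hermitian_def ov using h Mii by (simp add: hc)
  moreover have "(M - outer v) $ i $ b = 0" for b
    unfolding ov using False by simp
  moreover have "(M - outer v) $ j $ b = 0" if "\<forall>b. M $ j $ b = 0" for j b
    using that unfolding ov by simp
  ultimately show ?thesis by (auto simp: psd_def)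
qed

lemma UNIV_3_other_two:
  fixes i :: 3
  obtains j k where "j \<noteq> i" "k \<noteq> i" "j \<noteq> k" "\<forall>c. c = i \<or> c = j \<or> c = k"
proof -
  have d: "(1::3) \<noteq> 2" "(1::3) \<noteq> 3" "(2::3) \<noteq> 3" by simp_all
  consider "i = 1" | "i = 2" | "i = 3" using exhaust_3 by blast
  then show ?thesis
    by cases (use that d exhaust_3 in \<open>metis\<close>)+
qed

text \<open>Two Cholesky steps along the other two indices leave a multiple of the remaining
  diagonal unit.\<close>
lemma psd_eq_two_outer_plus_diag_proj:
  fixes M :: qmat
  assumes "psd M"
  obtains v w t where "0 \<le> t" "M = outer v + outer w + diag_proj i t"
proof -
  obtain j k where jk: "j \<noteq> i" "k \<noteq> i" "j \<noteq> k" "\<forall>c. c = i \<or> c = j \<or> c = k"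
    using UNIV_3_other_two by blast
  obtain v where v: "psd (M - outer v)" "\<forall>b. (M - outer v) $ j $ b = 0"
    using psd_peel_row[OF assms, of j] by blast
  obtain w where w: "psd (M - outer v - outer w)" "\<forall>b. (M - outer v - outer w) $ k $ b = 0"
     "\<forall>b. (M - outer v - outer w) $ j $ b = 0"
    using psd_peel_row[OF v(1), of k] v(2) by blast
  define R where "R = M - outer v - outer w"
  define t where "t = Re (R $ i $ i)"
  have hR: "hermitian R" using w(1) R_def by (simp add: psd_def)
  have t0: "0 \<le> t" using psd_diag_nonneg[OF w(1)] R_def t_def by simp
  have Rrow: "R $ j $ c = 0" "R $ k $ c = 0" for c using w R_def by auto
  have Rcol: "R $ c $ j = 0" "R $ c $ k = 0" for c
    using hR Rrow unfolding hermitian_def by (metis complex_cnj_zero)+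
  have Rii: "R $ i $ i = of_real t" using hermitian_diag_real[OF hR, of i] t_def by simp
  have "R $ a $ b = diag_proj i t $ a $ b" for a b
  proof -
    have "a = i \<or> a = j \<or> a = k" "b = i \<or> b = j \<or> b = k" using jk(4) by auto
    then show ?thesis using Rrow Rcol Rii jk(1,2) by (auto simp: diag_proj_def)
  qed
  then have "R = diag_proj i t" by (simp add: vec_eq_iff)
  then show ?thesis using that t0 unfolding R_def by (simp add: algebra_simps)
qed

lemma outer_unit_sqrt: "0 \<le> t \<Longrightarrow> outer (\<chi> c. if c = i then of_real (sqrt t) else 0) = diag_proj i t"
  unfolding outer_def diag_proj_def vec_eq_iff by (simp flip: of_real_mult)

lemma psd_eq_three_outer:
  fixes M :: qmat
  assumes "psd M"
  obtains u v w where "M = outer u + outer v + outer w"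
  using psd_eq_two_outer_plus_diag_proj[OF assms] outer_unit_sqrt by metis

definition perms3 :: "(3 \<Rightarrow> 3) set" where
  "perms3 = {p. inj p}"

text \<open>P_p (M \<circ> \<rho>) P_p^\<dagger>, with \<circ> the entrywise product and P_p the permutation
  matrix sending e_i to e_(p i).\<close>
definition perm_schur :: "(3 \<Rightarrow> 3) \<Rightarrow> qmat \<Rightarrow> qmat \<Rightarrow> qmat" where
  "perm_schur p M \<rho> = (\<chi> a b. \<Sum>i\<in>UNIV. \<Sum>j\<in>UNIV.
      if p i = a \<and> p j = b then M $ i $ j * \<rho> $ i $ j else 0)"

definition schur_rep :: "(qmat \<Rightarrow> qmat) \<Rightarrow> ((3 \<Rightarrow> 3) \<Rightarrow> qmat) \<Rightarrow> bool" where
  "schur_rep \<Phi> G \<longleftrightarrow> (\<forall>p\<in>perms3. psd (G p)) \<and>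
     (\<forall>\<rho>. \<Phi> \<rho> = (\<Sum>p\<in>perms3. perm_schur p (G p) \<rho>)) \<and>
     (\<forall>i. (\<Sum>p\<in>perms3. G p $ i $ i) = 1)"

definition three_term :: "((3 \<Rightarrow> 3) \<Rightarrow> qmat) \<Rightarrow> (3 \<Rightarrow> 3) set" where
  "three_term G = {p\<in>perms3. \<not> sum_two_outer (G p)}"

lemma card_perms3: "card perms3 = 6"
proof -
  have "inj p \<longleftrightarrow> bij p" for p :: "3 \<Rightarrow> 3"
    using finite_UNIV_inj_surj[of p] by (auto simp: bij_def)
  then have "perms3 = {p. p permutes (UNIV :: 3 set)}"
    by (auto simp: perms3_def permutes_univ bij_iff)
  moreover have "card {p. p permutes (UNIV :: 3 set)} = fact 3"
    by (rule card_permutations) simp_all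
  ultimately show ?thesis by (simp add: numeral_3_eq_3)
qed

lemma perm_schur_zero [simp]: "perm_schur p 0 \<rho> = 0"
  unfolding perm_schur_def vec_eq_iff by (simp cong: if_cong)

lemma if_zero_add: "(if C then (x::complex) + y else 0) = (if C then x else 0) + (if C then y else 0)"
  by simp

lemma if_zero_diff: "(if C then (x::complex) - y else 0) = (if C then x else 0) - (if C then y else 0)"
  by simp

lemma perm_schur_add: "perm_schur p (A + B) \<rho> = perm_schur p A \<rho> + perm_schur p B \<rho>"
  unfolding perm_schur_def vec_eq_iff
  by (simp add: distrib_right if_zero_add sum.distrib cong: if_cong)

lemma perm_schur_diff: "perm_schur p (A - B) \<rho> = perm_schur p A \<rho> - perm_schur p B \<rho>"
  unfolding perm_schur_def vec_eq_iff
  by (simp add: left_diff_distrib if_zero_diff sum_subtractf cong: if_cong)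

lemma perm_schur_sum_list:
  "perm_schur p (sum_list (map f xs)) \<rho> = sum_list (map (\<lambda>x. perm_schur p (f x) \<rho>) xs)"
  by (induction xs) (simp_all add: perm_schur_add)

text \<open>This depends on p only through p i: the key to moving diagonal mass between blocks.\<close>
lemma perm_schur_diag_proj:
  "perm_schur p (diag_proj i t) \<rho> = (\<chi> a b. if p i = a \<and> p i = b then of_real t * \<rho> $ i $ i else 0)"
proof -
  have "(\<Sum>j\<in>UNIV. if p k = a \<and> p j = b then diag_proj i t $ k $ j * \<rho> $ k $ j else 0)
      = (if k = i then (if p i = a \<and> p i = b then of_real t * \<rho> $ i $ i else 0) else 0)" for a b k
  proof -
    have e: "(\<lambda>j. if p k = a \<and> p j = b then diag_proj i t $ k $ j * \<rho> $ k $ j else 0) =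
       (\<lambda>j. if j = i then (if k = i \<and> p i = a \<and> p i = b then of_real t * \<rho> $ i $ i else 0) else 0)"
      by (rule ext) (auto simp: diag_proj_def)
    show ?thesis by (subst e) simp
  qed
  then show ?thesis unfolding perm_schur_def vec_eq_iff by simp
qed

lemma schur_rep_move_diag_proj:
  assumes G: "schur_rep \<Phi> G" and p: "p \<in> perms3" and q: "q \<in> perms3"
    and pq: "p \<noteq> q" and i: "p i = q i"
  obtains G' where "schur_rep \<Phi> G'" "three_term G' \<subseteq> three_term G - {p} \<union> {q}"
proof -
  have "psd (G p)" "psd (G q)" using G p q by (auto simp: schur_rep_def)
  then obtain v w t where t: "0 \<le> t" "G p = outer v + outer w + diag_proj i t"
    using psd_eq_two_outer_plus_diag_proj by metis
  define D where "D = diag_proj i t"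
  define G' where "G' = G(p := G p - D, q := G q + D)"
  have G'p: "G' p = outer v + outer w" using pq t by (simp add: G'_def D_def)
  have G'q: "G' q = G q + D" by (simp add: G'_def)
  have G'_eq: "G' s = G s - (if s = p then D else 0) + (if s = q then D else 0)" for s
    using pq by (auto simp: G'_def)
  have "psd (G' s)" if "s \<in> perms3" for s
    using that G psd_add[OF \<open>psd (G q)\<close> psd_diag_proj[OF t(1)]] G'p G'q psd_add psd_outer
    by (cases "s = p"; cases "s = q") (auto simp: G'_def schur_rep_def D_def)
  moreover have "(\<Sum>s\<in>perms3. perm_schur s (G' s) \<rho>) = (\<Sum>s\<in>perms3. perm_schur s (G s) \<rho>)" for \<rho>
  proof -
    have "perm_schur q D \<rho> = perm_schur p D \<rho>"
      unfolding D_def perm_schur_diag_proj i ..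
    then show ?thesis
      using p q unfolding G'_eq perm_schur_add perm_schur_diff
      by (simp add: sum.distrib sum_subtractf if_distrib[of "\<lambda>M. perm_schur _ M _"] cong: if_cong)
  qed
  moreover have "(\<Sum>s\<in>perms3. G' s $ k $ k) = (\<Sum>s\<in>perms3. G s $ k $ k)" for k
    using p q unfolding G'_eq
    by (simp add: sum.distrib sum_subtractf if_distrib[of "\<lambda>M. M $ _ $ _"] cong: if_cong)
  ultimately have "schur_rep \<Phi> G'" using G by (simp add: schur_rep_def)
  moreover have "G' s = G s" if "s \<noteq> p" "s \<noteq> q" for s
    using that by (simp add: G'_def)
  then have "three_term G' \<subseteq> three_term G - {p} \<union> {q}"
    using G'p unfolding three_term_def sum_two_outer_def by auto metis
  ultimately show ?thesis using that by blast
qed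

lemma perms3_common_value_with_third:
  assumes p: "p \<in> perms3" and q: "q \<in> perms3" and disjoint: "\<forall>i. p i \<noteq> q i"
  obtains r i j where "r \<in> perms3" "r \<noteq> p" "r \<noteq> q" "p i = r i" "q j = r j"
proof -
  define i0 :: 3 where "i0 = 1"
  have inj: "inj q" "inj p" using p q by (auto simp: perms3_def)
  then obtain k where k: "q k = p i0"
    using finite_UNIV_inj_surj[of q] by (metis finite surj_def)
  have ki: "k \<noteq> i0" using k disjoint by metis
  obtain j' k' where jk: "j' \<noteq> i0" "k' \<noteq> i0" "j' \<noteq> k'" "\<forall>c. c = i0 \<or> c = j' \<or> c = k'"
    using UNIV_3_other_two by blast
  define j where "j = (if j' = k then k' else j')"
  have j: "j \<noteq> i0" "j \<noteq> k" using jk ki unfolding j_def by auto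
  \<comment> \<open>Swap the values of q at i0 and k: r then agrees with p at i0 and with q at j.\<close>
  define r where "r c = (if c = i0 then p i0 else if c = k then q i0 else q c)" for c
  have "inj r"
    unfolding inj_def
  proof (intro allI impI)
    fix c d assume e: "r c = r d"
    have qq: "q x = q y \<longleftrightarrow> x = y" for x y using inj(1) by (simp add: inj_eq)
    show "c = d"
      using e ki disjoint k unfolding r_def by (auto split: if_splits simp: qq, (metis qq)+)
  qed
  moreover have "r i0 = p i0" "r j = q j" using j by (simp_all add: r_def)
  ultimately show ?thesis
    using that[of r i0 j] disjoint by (metis mem_Collect_eq perms3_def)
qed

lemma schur_rep_at_most_one_three_term:
  "schur_rep \<Phi> G \<Longrightarrow> \<exists>G'. schur_rep \<Phi> G' \<and> card (three_term G') \<le> 1"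
proof (induction "card (three_term G)" arbitrary: G rule: less_induct)
  case less
  have fin: "finite (three_term G)" by (simp add: three_term_def)
  show ?case
  proof (cases "card (three_term G) \<le> 1")
    case True then show ?thesis using less.prems by blast
  next
    case False
    then obtain p q where pq: "p \<in> three_term G" "q \<in> three_term G" "p \<noteq> q"
      using card_le_Suc0_iff_eq[OF fin] by auto
    then have pP: "p \<in> perms3" and qP: "q \<in> perms3" by (auto simp: three_term_def)
    have smaller: "card (three_term G') < card (three_term G)"
      if "three_term G' \<subseteq> three_term G - {p, q} \<union> {r}" for G' r
    proof -
      have "card (three_term G') \<le> card (three_term G - {p, q}) + 1"
        using card_mono[OF _ that] card_Un_le[of "three_term G - {p, q}" "{r}"] fin by simp
      moreover have "card (three_term G - {p, q}) = card (three_term G) - 2"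
        using pq fin by (auto simp: card_Diff_subset)
      ultimately show ?thesis using False by linarith
    qed
    show ?thesis
    proof (cases "\<exists>i. p i = q i")
      case True
      then obtain i where "p i = q i" by blast
      then obtain G1 where "schur_rep \<Phi> G1" "three_term G1 \<subseteq> three_term G - {p} \<union> {q}"
        using schur_rep_move_diag_proj[OF less.prems pP qP pq(3)] by blast
      moreover have "three_term G - {p} \<union> {q} \<subseteq> three_term G - {p, q} \<union> {q}" by blast
      ultimately show ?thesis using less.hyps smaller by (meson order_trans)
    next
      case False
      then obtain r i j where r: "r \<in> perms3" "r \<noteq> p" "r \<noteq> q" "p i = r i" "q j = r j"
        using perms3_common_value_with_third[OF pP qP] by metis
      obtain G1 where G1: "schur_rep \<Phi> G1" "three_term G1 \<subseteq> three_term G - {p} \<union> {r}"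
        using schur_rep_move_diag_proj[OF less.prems pP r(1) r(2)[symmetric] r(4)] by blast
      obtain G2 where G2: "schur_rep \<Phi> G2" "three_term G2 \<subseteq> three_term G1 - {q} \<union> {r}"
        using schur_rep_move_diag_proj[OF G1(1) qP r(1) r(3)[symmetric] r(5)] by blast
      have "three_term G2 \<subseteq> three_term G - {p, q} \<union> {r}" using G1(2) G2(2) by blast
      then show ?thesis using less.hyps smaller G2(1) by blast
    qed
  qed
qed

definition perm_kraus :: "(3 \<Rightarrow> 3) \<Rightarrow> complex^3 \<Rightarrow> qmat" where
  "perm_kraus p v = (\<chi> a i. if a = p i then v $ i else 0)"

definition diag_part :: "qmat \<Rightarrow> qmat" where
  "diag_part M = (\<chi> i j. if i = j then M $ i $ i else 0)"

lemma diag_part_add: "diag_part (A + B) = diag_part A + diag_part B"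
  by (simp add: diag_part_def vec_eq_iff)

lemma diag_part_sum_list: "diag_part (sum_list (map f xs)) = sum_list (map (\<lambda>x. diag_part (f x)) xs)"
  by (induction xs) (simp_all add: diag_part_add, simp add: diag_part_def vec_eq_iff)

lemma perm_kraus_sandwich: "perm_kraus p v ** \<rho> ** cadj (perm_kraus p v) = perm_schur p (outer v) \<rho>"
proof -
  have "(\<Sum>j\<in>UNIV. (\<Sum>i\<in>UNIV. (if a = p i then v $ i else 0) * \<rho> $ i $ j) *
          (if b = p j then cnj (v $ j) else 0)) =
        (\<Sum>i\<in>UNIV. \<Sum>j\<in>UNIV. if p i = a \<and> p j = b then v $ i * cnj (v $ j) * \<rho> $ i $ j else 0)"
    for a b
  proof -
    have "(\<Sum>j\<in>UNIV. (\<Sum>i\<in>UNIV. (if a = p i then v $ i else 0) * \<rho> $ i $ j) *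
          (if b = p j then cnj (v $ j) else 0)) =
          (\<Sum>i\<in>UNIV. \<Sum>j\<in>UNIV. (if a = p i then v $ i else 0) * \<rho> $ i $ j *
          (if b = p j then cnj (v $ j) else 0))"
      by (simp add: sum_distrib_right) (rule sum.swap)
    also have "\<dots> = (\<Sum>i\<in>UNIV. \<Sum>j\<in>UNIV. if p i = a \<and> p j = b then v $ i * cnj (v $ j) * \<rho> $ i $ j else 0)"
      by (intro sum.cong refl) auto
    finally show ?thesis .
  qed
  then show ?thesis
    unfolding perm_schur_def perm_kraus_def matrix_matrix_mult_def cadj_def outer_def vec_eq_iff
    by (simp add: cnj_if_zero cong: if_cong)
qed

lemma perm_kraus_gram:
  assumes "inj p"
  shows "cadj (perm_kraus p v) ** perm_kraus p v = diag_part (outer v)"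
proof -
  have "(\<Sum>a\<in>UNIV. cnj (if a = p i then v $ i else 0) * (if a = p j then v $ j else 0)) =
        (\<Sum>a\<in>UNIV. if a = p i then (if p i = p j then cnj (v $ i) * v $ j else 0) else 0)" for i j
    by (intro sum.cong refl) auto
  also have "\<dots> i j = (if i = j then v $ i * cnj (v $ i) else 0)" for i j
    using assms by (simp add: inj_eq mult.commute)
  finally show ?thesis
    unfolding diag_part_def perm_kraus_def matrix_matrix_mult_def cadj_def outer_def vec_eq_iff
    by simp
qed

lemma sandwich_diagonal:
  assumes "diagonal_mat \<rho>" and "\<And>i. \<rho> $ i $ i = of_real (r i)"
  shows "K ** \<rho> ** cadj K = (\<Sum>i\<in>UNIV. r i *\<^sub>R outer (column i K))"
proof -
  have "(\<Sum>i\<in>UNIV. K $ a $ i * \<rho> $ i $ j) = (\<Sum>i\<in>UNIV. if i = j then K $ a $ j * of_real (r j) else 0)"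
    for a j using assms unfolding diagonal_mat_def by (intro sum.cong refl) auto
  then show ?thesis
    unfolding matrix_matrix_mult_def cadj_def vec_eq_iff column_def outer_def
    by (simp add: scaleR_mat_nth algebra_simps del: vector_scaleR_component)
qed

lemma incoherent_krausI:
  assumes column_support: "\<And>i a b. K $ a $ i \<noteq> 0 \<Longrightarrow> K $ b $ i \<noteq> 0 \<Longrightarrow> a = b"
  shows "incoherent_kraus K"
  unfolding incoherent_kraus_def
proof (intro allI impI)
  fix \<rho> assume inc: "incoherent_state \<rho>" and trnz: "ctrace (K ** \<rho> ** cadj K) \<noteq> 0"
  define M where "M = K ** \<rho> ** cadj K"
  have dm: "density_matrix \<rho>" and dg: "diagonal_mat \<rho>" using inc by (auto simp: incoherent_state_def)
  define r where "r i = Re (\<rho> $ i $ i)" for i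
  have rr: "\<rho> $ i $ i = of_real (r i)" and r0: "0 \<le> r i" for i
  proof -
    have "Im (qform \<rho> (\<chi> c. if c = i then 1 else 0)) = 0" "0 \<le> Re (qform \<rho> (\<chi> c. if c = i then 1 else 0))"
      using dm unfolding density_matrix_def qform_eq_mult_vec by auto
    then show "\<rho> $ i $ i = of_real (r i)" "0 \<le> r i" unfolding qform_unit r_def
      by (simp_all add: complex_eq_iff)
  qed
  have Mf: "M = (\<Sum>i\<in>UNIV. r i *\<^sub>R outer (column i K))"
    unfolding M_def by (rule sandwich_diagonal[OF dg rr])
  have psdM: "psd M" unfolding Mf
    by (rule psd_sum) (simp add: psd_scaleR r0 psd_outer)
  have Mab: "M $ a $ b = (\<Sum>i\<in>UNIV. of_real (r i) * (K $ a $ i * cnj (K $ b $ i)))" for a b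
    unfolding Mf by (simp add: outer_def column_def scaleR_mat_nth del: vector_scaleR_component)
  define T where "T = (\<Sum>a\<in>UNIV. \<Sum>i\<in>UNIV. r i * (cmod (K $ a $ i))^2)"
  have "K $ a $ i * cnj (K $ a $ i) = of_real ((cmod (K $ a $ i))^2)" for a i
    by (metis complex_norm_square)
  then have tr: "ctrace M = of_real T"
    unfolding ctrace_def Mab T_def by simp
  have "0 \<le> T" unfolding T_def using r0 by (intro sum_nonneg) simp
  moreover have "T \<noteq> 0" using trnz tr M_def by auto
  ultimately have Tpos: "0 < T" by simp
  define X where "X = (\<chi> i j. M $ i $ j / ctrace M)"
  have "cnj (M $ a $ b) = M $ b $ a" for a b using psdM by (simp add: psd_def hermitian_def)
  then have "cadj X = X" unfolding X_def cadj_def vec_eq_iff tr by simp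
  moreover have "Im (qform X v) = 0 \<and> 0 \<le> Re (qform X v)" for v
  proof -
    have "qform X v = qform M v / of_real T"
      unfolding X_def tr qform_def by (simp add: sum_divide_distrib[symmetric] algebra_simps)
    also have "qform M v = of_real (Re (qform M v))"
      using hermitian_qform_real psdM unfolding psd_def by blast
    finally have "qform X v = of_real (Re (qform M v) / T)" by simp
    moreover have "0 \<le> Re (qform M v)" using psdM by (simp add: psd_def)
    ultimately show ?thesis using Tpos by simp
  qed
  moreover have "ctrace X = 1"
    unfolding X_def ctrace_def using trnz M_def by (simp add: sum_divide_distrib[symmetric] ctrace_def)
  moreover have "M $ a $ b = 0" if "a \<noteq> b" for a b
    unfolding Mab
  proof (rule sum.neutral, rule ballI)
    fix i
    have "K $ a $ i = 0 \<or> K $ b $ i = 0" using column_support that by blast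
    then show "of_real (r i) * (K $ a $ i * cnj (K $ b $ i)) = 0" by auto
  qed
  then have "diagonal_mat X" by (simp add: diagonal_mat_def X_def)
  ultimately show "incoherent_state (\<chi> i j. (K ** \<rho> ** cadj K) $ i $ j / ctrace (K ** \<rho> ** cadj K))"
    unfolding incoherent_state_def density_matrix_def M_def[symmetric] X_def[symmetric] qform_eq_mult_vec
    by blast
qed

lemma incoherent_state_diag_proj: "incoherent_state (diag_proj i 1)"
proof -
  have "cadj (diag_proj i 1) = diag_proj i 1" by (auto simp: cadj_def diag_proj_def vec_eq_iff)
  moreover have "Im (qform (diag_proj i 1) v) = 0 \<and> 0 \<le> Re (qform (diag_proj i 1) v)" for v
    by (simp add: qform_diag_proj complex_mult_cnj mult.commute[of "cnj _"])
  moreover have "ctrace (diag_proj i 1) = 1" by (simp add: ctrace_def diag_proj_def)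
  moreover have "diagonal_mat (diag_proj i 1)" by (simp add: diagonal_mat_def diag_proj_def)
  ultimately show ?thesis unfolding incoherent_state_def density_matrix_def qform_eq_mult_vec by simp
qed

text \<open>Feed in the pure basis state e_i: its image is the outer product of column i.\<close>
lemma incoherent_kraus_column_support:
  assumes inc: "incoherent_kraus K" and ab: "a \<noteq> b"
  shows "K $ a $ i = 0 \<or> K $ b $ i = 0"
proof (rule ccontr)
  assume nz: "\<not> (K $ a $ i = 0 \<or> K $ b $ i = 0)"
  define E where "E = diag_proj i 1"
  have "K ** E ** cadj K = (\<Sum>j\<in>UNIV. (if j = i then 1 else 0) *\<^sub>R outer (column j K))"
    by (rule sandwich_diagonal[where r = "\<lambda>j. if j = i then 1 else 0"]) (simp_all add: E_def diag_proj_def diagonal_mat_def)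
  also have "\<dots> = outer (column i K)"
    by (simp add: if_distrib[of "\<lambda>r. r *\<^sub>R _"] cong: if_cong)
  finally have M: "K ** E ** cadj K = outer (column i K)" .
  define T where "T = (\<Sum>x\<in>UNIV. (cmod (K $ x $ i))^2)"
  have "K $ x $ i * cnj (K $ x $ i) = of_real ((cmod (K $ x $ i))^2)" for x
    by (metis complex_norm_square)
  then have "ctrace (K ** E ** cadj K) = of_real T"
    unfolding M ctrace_def outer_def column_def T_def by simp
  moreover have "T \<noteq> 0"
    using nz unfolding T_def by (subst sum_nonneg_eq_0_iff) auto
  ultimately have trnz: "ctrace (K ** E ** cadj K) \<noteq> 0" by simp
  have "incoherent_state (\<chi> x y. (K ** E ** cadj K) $ x $ y / ctrace (K ** E ** cadj K))"
    using inc trnz incoherent_state_diag_proj unfolding incoherent_kraus_def E_def by blast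
  then have "(K ** E ** cadj K) $ a $ b / ctrace (K ** E ** cadj K) = 0"
    using ab unfolding incoherent_state_def diagonal_mat_def by auto
  then show False using nz trnz unfolding M by (simp add: outer_def column_def)
qed

lemma inj_on_extend_inj:
  fixes g :: "'a::finite \<Rightarrow> 'a"
  assumes "inj_on g S"
  obtains p where "inj p" "\<forall>i\<in>S. p i = g i"
proof -
  have "card (UNIV - S) = card (UNIV - g ` S)"
    using assms by (simp add: card_Diff_subset card_image)
  then obtain h where h: "bij_betw h (UNIV - S) (UNIV - g ` S)"
    using finite_same_card_bij[of "UNIV - S" "UNIV - g ` S"] by auto
  define p where "p i = (if i \<in> S then g i else h i)" for i
  have "bij_betw p S (g ` S)"
    using assms unfolding bij_betw_def inj_on_def p_def by auto
  moreover have "bij_betw p (UNIV - S) (UNIV - g ` S)"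
    using h by (rule bij_betw_cong[THEN iffD1, rotated]) (simp add: p_def)
  ultimately have "bij_betw p (S \<union> (UNIV - S)) (g ` S \<union> (UNIV - g ` S))"
    by (rule bij_betw_combine) auto
  then have "inj p" by (simp add: bij_betw_def)
  then show ?thesis using that by (simp add: p_def)
qed

lemma strictly_incoherent_kraus_iff:
  "strictly_incoherent_kraus K \<longleftrightarrow> (\<exists>p v. inj p \<and> K = perm_kraus p v)"
proof
  assume "strictly_incoherent_kraus K"
  then have col: "K $ a $ i = 0 \<or> K $ b $ i = 0"
    and row: "K $ i $ a = 0 \<or> K $ i $ b = 0" if "a \<noteq> b" for a b i
    using incoherent_kraus_column_support[of K a b i] incoherent_kraus_column_support[of "cadj K" a b i] that
    by (simp_all add: strictly_incoherent_kraus_def cadj_def)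
  define S where "S = {i. \<exists>a. K $ a $ i \<noteq> 0}"
  define g where "g i = (SOME a. K $ a $ i \<noteq> 0)" for i
  have gS: "K $ g i $ i \<noteq> 0" if "i \<in> S" for i
    using that unfolding S_def g_def by (metis (mono_tags, lifting) mem_Collect_eq someI_ex)
  have g_unique: "a = g i" if "K $ a $ i \<noteq> 0" for a i
  proof -
    have "i \<in> S" using that S_def by auto
    then show ?thesis using gS col that by metis
  qed
  have "inj_on g S"
    unfolding inj_on_def using gS row by metis
  then obtain p where p: "inj p" "\<forall>i\<in>S. p i = g i" using inj_on_extend_inj by blast
  have "K $ a $ i = perm_kraus p (\<chi> i. K $ p i $ i) $ a $ i" for a i
  proof (cases "K $ a $ i = 0")
    case False
    then have "i \<in> S" "a = g i" using g_unique S_def by auto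
    then show ?thesis using p by (simp add: perm_kraus_def)
  qed (auto simp: perm_kraus_def)
  then have "K = perm_kraus p (\<chi> i. K $ p i $ i)" unfolding vec_eq_iff by blast
  then show "\<exists>p v. inj p \<and> K = perm_kraus p v" using p(1) by blast
next
  assume "\<exists>p v. inj p \<and> K = perm_kraus p v"
  then obtain p v where "inj p" "K = perm_kraus p v" by blast
  moreover have "incoherent_kraus (perm_kraus p v)"
    by (rule incoherent_krausI) (auto simp: perm_kraus_def split: if_splits)
  moreover have "incoherent_kraus (cadj (perm_kraus p v))"
    by (rule incoherent_krausI) (use \<open>inj p\<close> in \<open>auto simp: perm_kraus_def cadj_def inj_eq split: if_splits\<close>)
  ultimately show "strictly_incoherent_kraus K" by (simp add: strictly_incoherent_kraus_def)
qed

lemma sum_list_concat: "sum_list (concat xss) = sum_list (map sum_list (xss :: 'a::monoid_add list list))"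
  by (induction xss) simp_all

lemma ex_map_preimage_list:
  "\<forall>x\<in>set xs. \<exists>y. P y \<and> x = f y \<Longrightarrow> \<exists>ys. xs = map f ys \<and> (\<forall>y\<in>set ys. P y)"
proof (induction xs)
  case (Cons x xs)
  then obtain y ys where "P y" "x = f y" "xs = map f ys" "\<forall>y\<in>set ys. P y" by auto
  then show ?case by (intro exI[of _ "y # ys"]) auto
qed simp

lemma sum_sum_list_if_eq:
  fixes f :: "'a \<Rightarrow> 'b::comm_monoid_add"
  assumes "finite S" and "\<forall>x\<in>set xs. g x \<in> S"
  shows "(\<Sum>s\<in>S. sum_list (map (\<lambda>x. if g x = s then f x else 0) xs)) = sum_list (map f xs)"
  using assms(2) by (induction xs) (simp_all add: sum.distrib assms(1))

lemma SIO_imp_schur_rep: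
  assumes "SIO \<Phi>"
  obtains G where "schur_rep \<Phi> G"
proof -
  obtain Ks where Ks: "kraus_rep \<Phi> Ks" "\<forall>K\<in>set Ks. strictly_incoherent_kraus K"
    using assms by (auto simp: SIO_def)
  then obtain pvs where pvs: "Ks = map (\<lambda>pv. perm_kraus (fst pv) (snd pv)) pvs"
    "\<forall>pv\<in>set pvs. fst pv \<in> perms3"
    using ex_map_preimage_list[of Ks "\<lambda>pv. fst pv \<in> perms3" "\<lambda>pv. perm_kraus (fst pv) (snd pv)"]
    by (fastforce simp: strictly_incoherent_kraus_iff perms3_def)
  define G where "G s = sum_list (map (\<lambda>pv. if fst pv = s then outer (snd pv) else 0) pvs)" for s
  have "psd (G s)" for s
    unfolding G_def by (rule psd_sum_list) (auto simp: psd_outer psd_zero)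
  moreover have "\<Phi> \<rho> = (\<Sum>s\<in>perms3. perm_schur s (G s) \<rho>)" for \<rho>
  proof -
    have "\<Phi> \<rho> = sum_list (map (\<lambda>pv. perm_schur (fst pv) (outer (snd pv)) \<rho>) pvs)"
      using Ks(1) pvs(1) by (simp add: kraus_rep_def perm_kraus_sandwich o_def)
    also have "\<dots> = (\<Sum>s\<in>perms3. sum_list (map (\<lambda>pv.
        if fst pv = s then perm_schur (fst pv) (outer (snd pv)) \<rho> else 0) pvs))"
      using pvs(2) by (simp add: sum_sum_list_if_eq)
    also have "\<dots> = (\<Sum>s\<in>perms3. perm_schur s (G s) \<rho>)"
      unfolding G_def perm_schur_sum_list by (simp add: if_distrib[of "\<lambda>M. perm_schur _ M _"] cong: if_cong)
    finally show ?thesis .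
  qed
  moreover have "(\<Sum>s\<in>perms3. G s $ i $ i) = 1" for i
  proof -
    have "mat 1 = sum_list (map (\<lambda>K. cadj K ** K) Ks)" using Ks(1) by (simp add: kraus_rep_def)
    also have "\<dots> = diag_part (sum_list (map (\<lambda>pv. outer (snd pv)) pvs))"
      using pvs by (simp add: perm_kraus_gram diag_part_sum_list perms3_def o_def cong: map_cong)
    also have "sum_list (map (\<lambda>pv. outer (snd pv)) pvs) = (\<Sum>s\<in>perms3. G s)"
      unfolding G_def using pvs(2) by (simp add: sum_sum_list_if_eq)
    finally have "(mat 1 :: qmat) $ i $ i = diag_part (\<Sum>s\<in>perms3. G s) $ i $ i" by simp
    then show ?thesis by (simp add: diag_part_def mat_def)
  qed
  ultimately have "schur_rep \<Phi> G" by (simp add: schur_rep_def)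
  then show ?thesis by (rule that)
qed

lemma schur_rep_imp_kraus_rep:
  assumes G: "schur_rep \<Phi> G" and L: "\<forall>p\<in>perms3. G p = sum_list (map outer (L p))"
    and ps: "set ps = perms3" "distinct ps"
  shows "kraus_rep \<Phi> (concat (map (\<lambda>p. map (perm_kraus p) (L p)) ps))"
proof -
  let ?Ks = "concat (map (\<lambda>p. map (perm_kraus p) (L p)) ps)"
  have "sum_list (map (\<lambda>K. cadj K ** K) ?Ks) = (\<Sum>p\<in>perms3. diag_part (G p))"
    using ps L
    by (simp add: map_concat sum_list_concat o_def perm_kraus_gram perms3_def diag_part_sum_list
        sum_list_distinct_conv_sum_set cong: map_cong)
  also have "\<dots> = mat 1"
    using G unfolding schur_rep_def vec_eq_iff diag_part_def mat_def
    by (auto simp: if_distrib[of "\<lambda>x. x $ _"] cong: if_cong)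
  finally have "sum_list (map (\<lambda>K. cadj K ** K) ?Ks) = mat 1" .
  moreover have "\<Phi> \<rho> = sum_list (map (\<lambda>K. K ** \<rho> ** cadj K) ?Ks)" for \<rho>
  proof -
    have "\<Phi> \<rho> = (\<Sum>p\<in>perms3. perm_schur p (G p) \<rho>)" using G by (simp add: schur_rep_def)
    also have "\<dots> = sum_list (map (\<lambda>K. K ** \<rho> ** cadj K) ?Ks)"
      using ps L
      by (simp add: map_concat sum_list_concat o_def perm_kraus_sandwich perm_schur_sum_list
          sum_list_distinct_conv_sum_set cong: map_cong)
    finally show ?thesis .
  qed
  ultimately show ?thesis by (simp add: kraus_rep_def)
qed

lemma schur_rep_imp_small_kraus_rep:
  assumes G: "schur_rep \<Phi> G" and three: "card (three_term G) \<le> 1"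
  shows "\<exists>Ks. length Ks \<le> 13 \<and> kraus_rep \<Phi> Ks \<and> (\<forall>K\<in>set Ks. \<exists>p v. inj p \<and> K = perm_kraus p v)"
proof -
  have "\<exists>L. G p = sum_list (map outer L) \<and> length L \<le> (if p \<in> three_term G then 3 else 2)"
    if "p \<in> perms3" for p
  proof (cases "sum_two_outer (G p)")
    case True
    then obtain v w where "G p = outer v + outer w" by (auto simp: sum_two_outer_def)
    then show ?thesis by (intro exI[of _ "[v, w]"]) simp
  next
    case False
    then have "p \<in> three_term G" using that by (simp add: three_term_def)
    moreover have "psd (G p)" using G that by (simp add: schur_rep_def)
    then obtain u v w where "G p = outer u + outer v + outer w" by (rule psd_eq_three_outer)
    ultimately show ?thesis by (intro exI[of _ "[u, v, w]"]) (simp add: add.assoc)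
  qed
  then have "\<forall>p\<in>perms3. \<exists>L. G p = sum_list (map outer L) \<and>
      length L \<le> (if p \<in> three_term G then 3 else 2)" by blast
  from bchoice[OF this] obtain L where L: "\<forall>p\<in>perms3. G p = sum_list (map outer (L p)) \<and>
      length (L p) \<le> (if p \<in> three_term G then 3 else 2)"
    by blast
  obtain ps where ps: "set ps = perms3" "distinct ps"
    using finite_distinct_list[of perms3] by auto
  define Ks where "Ks = concat (map (\<lambda>p. map (perm_kraus p) (L p)) ps)"
  have "length Ks = (\<Sum>p\<in>perms3. length (L p))"
    unfolding Ks_def using ps by (simp add: length_concat o_def sum_list_distinct_conv_sum_set)
  also have "\<dots> \<le> (\<Sum>p\<in>perms3. 2 + (if p \<in> three_term G then 1 else 0))"
    using L by (intro sum_mono) auto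
  also have "\<dots> = 2 * card perms3 + (\<Sum>p\<in>perms3. if p \<in> three_term G then 1 else 0)"
    by (subst sum.distrib) simp
  also have "(\<Sum>p\<in>perms3. if p \<in> three_term G then 1 else 0) = card {p \<in> perms3. p \<in> three_term G}"
    by (simp add: sum.inter_filter[symmetric])
  also have "{p \<in> perms3. p \<in> three_term G} = three_term G"
    by (auto simp: three_term_def)
  finally have "length Ks \<le> 13" using three card_perms3 by simp
  moreover have "kraus_rep \<Phi> Ks"
    unfolding Ks_def using schur_rep_imp_kraus_rep[OF G _ ps] L by blast
  moreover have "\<forall>K\<in>set Ks. \<exists>p v. inj p \<and> K = perm_kraus p v"
    unfolding Ks_def using ps(1) by (auto simp: perms3_def)
  ultimately show ?thesis by blast
qed

theorem theorem2:
  fixes \<Phi> :: "qmat \<Rightarrow> qmat"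
  assumes "SIO \<Phi>"
  shows "\<exists>Ks. length Ks \<le> 13 \<and> kraus_rep \<Phi> Ks \<and>
              (\<forall>K\<in>set Ks. strictly_incoherent_kraus K)"
proof -
  obtain G0 where "schur_rep \<Phi> G0" using SIO_imp_schur_rep[OF assms] .
  then obtain G where "schur_rep \<Phi> G" "card (three_term G) \<le> 1"
    using schur_rep_at_most_one_three_term by blast
  then obtain Ks where "length Ks \<le> 13" "kraus_rep \<Phi> Ks"
      "\<forall>K\<in>set Ks. \<exists>p v. inj p \<and> K = perm_kraus p v"
    using schur_rep_imp_small_kraus_rep by blast
  then show ?thesis by (auto simp: strictly_incoherent_kraus_iff)
qed

end
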